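(* Let $g:(0,\infty)\to(0,\infty)$ be positive and nondecreasing with $\lim_{s\to0}g(s)/s=0$, and set $F(\lambda):=\int_\lambda^1\frac{ds}{g(s)}$ for $0<\lambda\le1$ (so that $F^{-1}:[0,\infty)\to(0,1]$ is well defined, continuous and strictly decreasing). Then for every $k>0$ there exists a constant $C>1$, depending only on $k$ and $g$, such that $$F^{-1}(t-k)\le C\,F^{-1}(t)\qquad\text{for all }t\ge k .$$ *)

theory Defs
  imports "HOL-Analysis.Analysis"
begin

definition F_of :: "(real \<Rightarrow> real) \<Rightarrow> real \<Rightarrow> real" where
  "F_of g l = integral {l..1} (\<lambda>s. 1 / g s)"

definition F_inv :: "(real \<Rightarrow> real) \<Rightarrow> real \<Rightarrow> real" where
  "F_inv g t = (THE l. 0 < l \<and> l \<le> 1 \<and> F_of g l = t)"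

end

theory Submission
  imports Defs
begin

text \<open>
  Since g(s)/s tends to 0 and g is monotone, g(s) \<le> M s on (0,1] for some M > 0; hence
  1/g(s) \<ge> 1/(M s), and the integral of 1/g over [a,b] is at least ln(b/a)/M for
  0 < a \<le> b \<le> 1.  This makes F strictly decreasing with F(exp(-M t)) \<ge> t, so F_inv is
  well defined on [0,\<infinity>); and if b = F_inv(t - k) exceeds a = F_inv(t), then
  k = F(a) - F(b) \<ge> ln(b/a)/M, that is b \<le> exp(k M) a.
\<close>

lemma mono_on_tendsto_zero_imp_linear_bound:
  fixes g :: "real \<Rightarrow> real" and r :: real
  assumes g_mono: "mono_on {0<..} g"
    and g_lim: "((\<lambda>s. g s / s) \<longlongrightarrow> 0) (at_right 0)"
    and "r > 0"
  shows "\<exists>M>0. \<forall>s. 0 < s \<and> s \<le> r \<longrightarrow> g s \<le> M * s"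
proof -
  have "\<forall>\<^sub>F s in at_right 0. dist (g s / s) 0 < 1"
    using tendstoD[OF g_lim] by simp
  then obtain d where d: "d > 0" "\<And>s. 0 < s \<Longrightarrow> s < d \<Longrightarrow> dist (g s / s) 0 < 1"
    unfolding eventually_at_right_field by auto
  define d' where "d' = min d r"
  have "0 < d'" using d \<open>r > 0\<close> by (simp add: d'_def)
  have small: "g s < s" if "0 < s" "s < d'" for s
  proof -
    have "\<bar>g s / s\<bar> < 1" using d(2)[of s] that by (simp add: d'_def)
    then show ?thesis using that by (simp add: abs_less_iff divide_less_eq)
  qed
  define M where "M = max 1 (g r / d')"
  have "g s \<le> M * s" if "0 < s" "s \<le> r" for s
  proof (cases "s < d'")
    case True
    then have "g s < s" using small that by auto
    also have "s \<le> M * s" using that by (simp add: M_def)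
    finally show ?thesis by simp
  next
    case False
    have "g s \<le> g r" using g_mono that by (auto simp: mono_on_def)
    also have "g r = (g r / d') * d'" using \<open>0 < d'\<close> by simp
    also have "\<dots> \<le> M * s" using False \<open>0 < d'\<close>
      by (intro mult_mono) (auto simp: M_def)
    finally show ?thesis .
  qed
  moreover have "M > 0" by (simp add: M_def)
  ultimately show ?thesis by blast
qed

lemma integrable_on_inverse_mono_on:
  fixes g :: "real \<Rightarrow> real"
  assumes g_pos: "\<And>s. s > 0 \<Longrightarrow> g s > 0"
    and g_mono: "mono_on {0<..} g"
    and "0 < a"
  shows "(\<lambda>s. 1 / g s) integrable_on {a..b}"
proof -
  have "mono_on {a..b} (\<lambda>s. - (1 / g s))"
  proof (rule mono_onI)
    fix r s assume "r \<in> {a..b}" "s \<in> {a..b}" "r \<le> s"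
    then have "0 < r" "g r \<le> g s" using \<open>0 < a\<close> g_mono by (auto simp: mono_on_def)
    then show "- (1 / g r) \<le> - (1 / g s)"
      using g_pos[of r] by (simp add: frac_le)
  qed
  from integrable_neg[OF integrable_on_mono_on[OF this]] show ?thesis by simp
qed

lemma ln_diff_le_integral_inverse:
  fixes g :: "real \<Rightarrow> real"
  assumes int: "(\<lambda>s. 1 / g s) integrable_on {a..b}"
    and bound: "\<And>s. s \<in> {a..b} \<Longrightarrow> 0 < g s \<and> g s \<le> M * s"
    and "0 < a" "a \<le> b" "M > 0"
  shows "(ln b - ln a) / M \<le> integral {a..b} (\<lambda>s. 1 / g s)"
proof -
  have "((\<lambda>s. 1 / s) has_integral (ln b - ln a)) {a..b}"
  proof (rule fundamental_theorem_of_calculus[OF \<open>a \<le> b\<close>])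
    fix x assume "x \<in> {a..b}"
    then have "x > 0" using \<open>0 < a\<close> by auto
    then show "(ln has_vector_derivative 1 / x) (at x within {a..b})"
      by (auto intro!: derivative_eq_intros
               simp: has_real_derivative_iff_has_vector_derivative[symmetric])
  qed
  from has_integral_mult_right[OF this, of "1 / M"]
  have "((\<lambda>s. 1 / s * (1 / M)) has_integral (ln b - ln a) / M) {a..b}"
    by (simp add: mult.commute)
  moreover have "((\<lambda>s. 1 / g s) has_integral integral {a..b} (\<lambda>s. 1 / g s)) {a..b}"
    using int by blast
  moreover have "1 / s * (1 / M) \<le> 1 / g s" if "s \<in> {a..b}" for s
  proof -
    have "0 < s" using that \<open>0 < a\<close> by auto
    then have "1 / (M * s) \<le> 1 / g s"
      using bound[OF that] \<open>M > 0\<close> by (intro divide_left_mono) auto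
    then show ?thesis by (simp add: mult.commute)
  qed
  ultimately show ?thesis by (rule has_integral_le)
qed

context
  fixes g :: "real \<Rightarrow> real" and M :: real
  assumes g_pos: "\<And>s. s > 0 \<Longrightarrow> g s > 0"
    and g_mono: "mono_on {0<..} g"
    and M_pos: "M > 0"
    and g_le_linear: "\<And>s. 0 < s \<Longrightarrow> s \<le> 1 \<Longrightarrow> g s \<le> M * s"
begin

lemma ln_diff_le_F_of_diff:
  assumes "0 < a" "a \<le> b" "b \<le> 1"
  shows "(ln b - ln a) / M \<le> F_of g a - F_of g b"
proof -
  have int: "(\<lambda>s. 1 / g s) integrable_on {a..1}"
    using integrable_on_inverse_mono_on[OF g_pos g_mono \<open>0 < a\<close>] .
  have "F_of g a = integral {a..b} (\<lambda>s. 1 / g s) + F_of g b"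
    unfolding F_of_def using Henstock_Kurzweil_Integration.integral_combine[OF assms(2,3) int] by simp
  moreover have "(ln b - ln a) / M \<le> integral {a..b} (\<lambda>s. 1 / g s)"
    using assms M_pos g_pos g_le_linear
    by (intro ln_diff_le_integral_inverse integrable_on_inverse_mono_on[OF g_pos g_mono]) auto
  ultimately show ?thesis by simp
qed

lemma F_of_strict_antimono:
  assumes "0 < a" "a < b" "b \<le> 1"
  shows "F_of g b < F_of g a"
proof -
  have "0 < (ln b - ln a) / M" using assms M_pos by simp
  also have "\<dots> \<le> F_of g a - F_of g b" using ln_diff_le_F_of_diff assms by simp
  finally show ?thesis by simp
qed

lemma continuous_on_F_of:
  assumes "0 < a"
  shows "continuous_on {a..1} (F_of g)"
proof -
  have "F_of g = (\<lambda>x. integral {x..1} (\<lambda>s. 1 / g s))" by (simp add: F_of_def fun_eq_iff)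
  then show ?thesis
    using indefinite_integral_continuous_1'[OF integrable_on_inverse_mono_on[OF g_pos g_mono assms]]
    by simp
qed

lemma F_of_unique_preimage:
  assumes "t \<ge> 0"
  shows "\<exists>!l. 0 < l \<and> l \<le> 1 \<and> F_of g l = t"
proof -
  define l0 where "l0 = exp (- (M * t))"
  have l0: "0 < l0" "l0 \<le> 1" using assms M_pos by (auto simp: l0_def)
  have "t = (ln 1 - ln l0) / M" using M_pos by (simp add: l0_def)
  also have "\<dots> \<le> F_of g l0" using ln_diff_le_F_of_diff[of l0 1] l0 by (simp add: F_of_def)
  finally have "t \<le> F_of g l0" .
  moreover have "F_of g 1 \<le> t" using assms by (simp add: F_of_def)
  ultimately obtain l where l: "l0 \<le> l" "l \<le> 1" "F_of g l = t"
    using IVT2'[of "F_of g" 1 t l0, OF _ _ l0(2) continuous_on_F_of[OF l0(1)]] by blast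
  show ?thesis
  proof (rule ex1I[of _ l])
    show "0 < l \<and> l \<le> 1 \<and> F_of g l = t" using l l0 by auto
    fix l' assume l': "0 < l' \<and> l' \<le> 1 \<and> F_of g l' = t"
    show "l' = l"
    proof (rule ccontr)
      assume "l' \<noteq> l"
      then consider "l' < l" | "l < l'" by linarith
      then show False
        using F_of_strict_antimono[of l' l] F_of_strict_antimono[of l l'] l l' l0 by cases auto
    qed
  qed
qed

lemma F_inv_spec:
  assumes "t \<ge> 0"
  shows "0 < F_inv g t" "F_inv g t \<le> 1" "F_of g (F_inv g t) = t"
  using theI'[OF F_of_unique_preimage[OF assms]] unfolding F_inv_def by auto

lemma F_inv_diff_le:
  assumes "0 \<le> k" "k \<le> t"
  shows "F_inv g (t - k) \<le> exp (k * M) * F_inv g t"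
proof -
  define a where "a = F_inv g t"
  define b where "b = F_inv g (t - k)"
  have a: "0 < a" "a \<le> 1" "F_of g a = t" using F_inv_spec[of t] assms by (auto simp: a_def)
  have b: "0 < b" "b \<le> 1" "F_of g b = t - k" using F_inv_spec[of "t - k"] assms by (auto simp: b_def)
  have "1 \<le> exp (k * M)" using assms M_pos by simp
  show "b \<le> exp (k * M) * a"
  proof (cases "b \<le> a")
    case True
    moreover have "a \<le> exp (k * M) * a"
      using mult_right_mono[OF \<open>1 \<le> exp (k * M)\<close>, of a] \<open>0 < a\<close> by simp
    ultimately show ?thesis by linarith
  next
    case False
    then have "(ln b - ln a) / M \<le> F_of g a - F_of g b"
      using ln_diff_le_F_of_diff[of a b] a b by linarith
    then have "(ln b - ln a) / M \<le> k" using a b by simp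
    then have "ln b - ln a \<le> k * M" using M_pos by (simp add: divide_le_eq)
    then have "ln b \<le> ln (exp (k * M) * a)" using \<open>0 < a\<close> by (simp add: ln_mult)
    then show ?thesis using a b by simp
  qed
qed

end

theorem lemma4p12:
  fixes g :: "real \<Rightarrow> real" and k :: real
  assumes g_pos: "\<And>s. s > 0 \<Longrightarrow> g s > 0"
    and g_mono: "mono_on {0<..} g"
    and g_lim: "((\<lambda>s. g s / s) \<longlongrightarrow> 0) (at_right 0)"
    and k_pos: "k > 0"
  shows "\<exists>C>1. \<forall>t\<ge>k. F_inv g (t - k) \<le> C * F_inv g t"
proof -
  obtain M where "M > 0" and g_le: "\<And>s. 0 < s \<Longrightarrow> s \<le> 1 \<Longrightarrow> g s \<le> M * s"
    using mono_on_tendsto_zero_imp_linear_bound[OF g_mono g_lim, of 1] by auto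
  have "exp (k * M) > 1" using k_pos \<open>M > 0\<close> by simp
  moreover have "\<forall>t\<ge>k. F_inv g (t - k) \<le> exp (k * M) * F_inv g t"
    using F_inv_diff_le[OF g_pos g_mono \<open>M > 0\<close> g_le] k_pos by simp
  ultimately show ?thesis by blast
qed

end
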